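(* Assume $S$ is symmetric. Then for every integer $k\ge0$, $F_k=F_k^+F_k^-$. Moreover, let $k\ge1$ with $F_{k+1}\neq0$ (so that $1-A_k$ is invertible and $F^\pm_{k+1}\ne0$) and put $E_{k,\ell}:=[(1-A_k)^{-1}]_{0,\ell}$ for $0\le\ell\le k$. Then for every $\ell$ with $0\le\ell<k/2$, $$E_{k,\ell}+E_{k,k-\ell}=\frac{F^+_{k,\ell}}{F^+_{k+1}},\qquad E_{k,\ell}-E_{k,k-\ell}=\frac{F^-_{k,\ell}}{F^-_{k+1}},$$ and if $k$ is even, $E_{k,k/2}=F^+_{k,k/2}/F^+_{k+1}$.
   Context: Let $S$ be a finite set of integers with $a:=\max S\ge1$; $S$ is called symmetric if $-S=S$ and $\omega_{-s}=\omega_s$ for all $s\in S$, where each $s\in S$ carries a weight $\omega_s$ in a field $K$ of characteristic $0$; set $\omega_s:=0$ for $s\notin S$. For $k\ge0$, $A_k$ is the $(k+1)\times(k+1)$ matrix with rows and columns indexed by $0,\dots,k$ whose $(i,j)$ entry is $\omega_{j-i}$; $F_0:=1$ and $F_k:=\det(1-A_{k-1})$ for $k\ge1$. (For formal weights, $E_{k,\ell}$ is the weighted generating function of paths with steps in $S$ from $0$ to $\ell$ staying within $[0,k]$.) For $k\ge0$, $A_k^+$ is the matrix with rows and columns indexed by the integers $0\le i,j\le k/2$ and entries $\omega_{j-i}+\omega_{k-j-i}$ if $j<k/2$ and $\omega_{j-i}$ if $j=k/2$; $A_k^-$ is the matrix with rows and columns indexed by the integers $0\le i,j<k/2$ and entries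 $\omega_{j-i}-\omega_{k-j-i}$. The determinant of an empty matrix is $1$. Put $F^\pm_0:=1$ and $F^\pm_k:=\det(1-A^\pm_{k-1})$ for $k\ge1$. For an index $\ell$ of $A^\pm_k$, $F^\pm_{k,\ell}$ is the $(\ell,0)$ cofactor of $1-A_k^\pm$, i.e. $(-1)^\ell$ times the determinant of $1-A_k^\pm$ with row $\ell$ and column $0$ deleted. *)

theory Defs
  imports "Jordan_Normal_Form.Determinant"
begin

text \<open>Weights are a function w :: int => 'a (w s = 0 for s outside S).
  Matrices are Jordan_Normal_Form matrices, rows/columns indexed from 0.\<close>

definition A_mat :: "(int \<Rightarrow> 'a::comm_ring_1) \<Rightarrow> nat \<Rightarrow> 'a mat" where
  "A_mat w k = mat (k+1) (k+1) (\<lambda>(i,j). w (int j - int i))"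

definition F :: "(int \<Rightarrow> 'a::comm_ring_1) \<Rightarrow> nat \<Rightarrow> 'a" where
  "F w k = (if k = 0 then 1 else det (1\<^sub>m k - A_mat w (k - 1)))"

text \<open>A_k^+ : indices 0 <= i,j <= k/2, i.e. i,j < k div 2 + 1.\<close>
definition Aplus_mat :: "(int \<Rightarrow> 'a::comm_ring_1) \<Rightarrow> nat \<Rightarrow> 'a mat" where
  "Aplus_mat w k = mat (k div 2 + 1) (k div 2 + 1)
     (\<lambda>(i,j). if 2 * j < k then w (int j - int i) + w (int k - int j - int i)
              else w (int j - int i))"

text \<open>A_k^- : indices 0 <= i,j < k/2, i.e. i,j < (k+1) div 2.\<close>
definition Aminus_mat :: "(int \<Rightarrow> 'a::comm_ring_1) \<Rightarrow> nat \<Rightarrow> 'a mat" where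
  "Aminus_mat w k = mat ((k+1) div 2) ((k+1) div 2)
     (\<lambda>(i,j). w (int j - int i) - w (int k - int j - int i))"

definition Fplus :: "(int \<Rightarrow> 'a::comm_ring_1) \<Rightarrow> nat \<Rightarrow> 'a" where
  "Fplus w k = (if k = 0 then 1 else det (1\<^sub>m (dim_row (Aplus_mat w (k - 1))) - Aplus_mat w (k - 1)))"

definition Fminus :: "(int \<Rightarrow> 'a::comm_ring_1) \<Rightarrow> nat \<Rightarrow> 'a" where
  "Fminus w k = (if k = 0 then 1 else det (1\<^sub>m (dim_row (Aminus_mat w (k - 1))) - Aminus_mat w (k - 1)))"

definition Fplus_cof :: "(int \<Rightarrow> 'a::comm_ring_1) \<Rightarrow> nat \<Rightarrow> nat \<Rightarrow> 'a" where
  "Fplus_cof w k l = cofactor (1\<^sub>m (dim_row (Aplus_mat w k)) - Aplus_mat w k) l 0"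

definition Fminus_cof :: "(int \<Rightarrow> 'a::comm_ring_1) \<Rightarrow> nat \<Rightarrow> nat \<Rightarrow> 'a" where
  "Fminus_cof w k l = cofactor (1\<^sub>m (dim_row (Aminus_mat w k)) - Aminus_mat w k) l 0"

definition inv_mat :: "'a::comm_ring_1 mat \<Rightarrow> 'a mat" where
  "inv_mat M = (THE B. B \<in> carrier_mat (dim_row M) (dim_row M) \<and>
                       M * B = 1\<^sub>m (dim_row M) \<and> B * M = 1\<^sub>m (dim_row M))"

definition E :: "(int \<Rightarrow> 'a::comm_ring_1) \<Rightarrow> nat \<Rightarrow> nat \<Rightarrow> 'a" where
  "E w k l = inv_mat (1\<^sub>m (k+1) - A_mat w k) $$ (0, l)"

end

theory Submission
  imports Defs
begin

text \<open>
  For even weights the reflection \<open>i \<mapsto> k - i\<close> commutes with A_k, so 1 - A_k preserves the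
  symmetric vectors, spanned by e_j + e_(k-j) for \<open>j \<le> k/2\<close>, and the antisymmetric ones,
  spanned by e_j - e_(k-j) for \<open>j < k/2\<close>. In this basis V it becomes the block diagonal matrix B
  with blocks 1 - A_k^+ and 1 - A_k^-, whence F = F^+ F^-. Inverting, (1 - A_k)^-1 V = V B^-1.
  In column j, row 0 of the left side is \<open>E_(k,j) \<plusminus> E_(k,k-j)\<close>; on the right, row 0 of V is
  e_0 plus the first antisymmetric basis vector, so the entry is row 0 of (1 - A_k^\<plusminus>)^-1,
  a cofactor divided by F^\<plusminus>_(k+1).
\<close>

lemma index_mult_mat_sparse_col:
  fixes X Y :: "'a::comm_ring_1 mat"
  assumes "dim_col X = n" "dim_row Y = n" "i < dim_row X" "j < dim_col Y" "a < n" "b < n"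
    and "\<And>l. l < n \<Longrightarrow> Y $$ (l,j) = (if l = a then 1 else 0) + (if l = b then c else 0)"
  shows "(X * Y) $$ (i,j) = X $$ (i,a) + c * X $$ (i,b)"
proof -
  have "(X * Y) $$ (i,j) = (\<Sum>l<n. X $$ (i,l) * ((if l = a then 1 else 0) + (if l = b then c else 0)))"
    using assms by (auto simp: scalar_prod_def atLeast0LessThan intro!: sum.cong)
  also have "\<dots> = (\<Sum>l<n. if l = a then X $$ (i,l) else 0) + (\<Sum>l<n. if l = b then c * X $$ (i,l) else 0)"
    by (subst sum.distrib[symmetric]) (auto simp: distrib_left mult.commute intro!: sum.cong)
  also have "\<dots> = X $$ (i,a) + c * X $$ (i,b)" using assms by simp
  finally show ?thesis .
qed

lemma index_mult_mat_sparse_row: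
  fixes X Y :: "'a::comm_ring_1 mat"
  assumes "dim_col Y = n" "dim_row X = n" "i < dim_row Y" "j < dim_col X" "a < n" "b < n \<or> c = 0"
    and "\<And>l. l < n \<Longrightarrow> Y $$ (i,l) = (if l = a then 1 else 0) + (if l = b then c else 0)"
  shows "(Y * X) $$ (i,j) = X $$ (a,j) + c * X $$ (b,j)"
proof -
  have "(Y * X) $$ (i,j) = (\<Sum>l<n. ((if l = a then 1 else 0) + (if l = b then c else 0)) * X $$ (l,j))"
    using assms by (auto simp: scalar_prod_def atLeast0LessThan intro!: sum.cong)
  also have "\<dots> = (\<Sum>l<n. if l = a then X $$ (l,j) else 0) + (\<Sum>l<n. if l = b then c * X $$ (l,j) else 0)"
    by (subst sum.distrib[symmetric]) (auto simp: distrib_right intro!: sum.cong)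
  also have "\<dots> = X $$ (a,j) + c * X $$ (b,j)" using assms by auto
  finally show ?thesis .
qed

lemma adj_mat_inverse:
  fixes M :: "'a::field mat"
  assumes M: "M \<in> carrier_mat n n" and d: "det M \<noteq> 0"
  shows "M * ((1 / det M) \<cdot>\<^sub>m adj_mat M) = 1\<^sub>m n" "((1 / det M) \<cdot>\<^sub>m adj_mat M) * M = 1\<^sub>m n"
proof -
  have "(1 / det M) \<cdot>\<^sub>m (det M \<cdot>\<^sub>m 1\<^sub>m n) = 1\<^sub>m n" using d by (intro eq_matI) auto
  then show "M * ((1 / det M) \<cdot>\<^sub>m adj_mat M) = 1\<^sub>m n" "((1 / det M) \<cdot>\<^sub>m adj_mat M) * M = 1\<^sub>m n"
    using adj_mat[OF M] M by (simp_all add: mult_smult_distrib mult_smult_assoc_mat)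
qed

lemma inv_mat_eqI:
  fixes M B :: "'a::comm_ring_1 mat"
  assumes M: "M \<in> carrier_mat n n" and B: "B \<in> carrier_mat n n"
    and MB: "M * B = 1\<^sub>m n" and BM: "B * M = 1\<^sub>m n"
  shows "inv_mat M = B"
  unfolding inv_mat_def
proof (rule the_equality)
  fix B' assume B': "B' \<in> carrier_mat (dim_row M) (dim_row M) \<and> M * B' = 1\<^sub>m (dim_row M) \<and> B' * M = 1\<^sub>m (dim_row M)"
  then have "B' = (B * M) * B'" using M BM by auto
  also have "\<dots> = B * (M * B')" using M B B' by (intro assoc_mult_mat) auto
  finally show "B' = B" using M B B' by simp
qed (use assms in auto)

lemma inv_mat_adj:
  fixes M :: "'a::field mat"
  assumes "M \<in> carrier_mat n n" and "det M \<noteq> 0"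
  shows "inv_mat M = (1 / det M) \<cdot>\<^sub>m adj_mat M"
  using assms adj_mat(1)[OF assms(1)] by (intro inv_mat_eqI adj_mat_inverse) auto

lemma inv_mat:
  fixes M :: "'a::field mat"
  assumes "M \<in> carrier_mat n n" and "det M \<noteq> 0"
  shows "inv_mat M \<in> carrier_mat n n" "M * inv_mat M = 1\<^sub>m n" "inv_mat M * M = 1\<^sub>m n"
  using adj_mat(1)[OF assms(1)] adj_mat_inverse[OF assms] by (simp_all add: inv_mat_adj[OF assms])

lemma inv_mat_index:
  fixes M :: "'a::field mat"
  assumes "M \<in> carrier_mat n n" and "det M \<noteq> 0" and "i < n" "j < n"
  shows "inv_mat M $$ (i,j) = cofactor M j i / det M"
  using assms by (simp add: inv_mat_adj adj_mat_def)

lemma mult_inverse_intertwine: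
  fixes M V B M' B' :: "'a::comm_ring_1 mat"
  assumes c: "M \<in> carrier_mat n n" "V \<in> carrier_mat n n" "B \<in> carrier_mat n n"
    "M' \<in> carrier_mat n n" "B' \<in> carrier_mat n n"
    and MV: "M * V = V * B" and M'M: "M' * M = 1\<^sub>m n" and BB': "B * B' = 1\<^sub>m n"
  shows "M' * V = V * B'"
proof -
  have "M' * V = M' * V * (B * B')" using c by (simp add: BB')
  also have "\<dots> = M' * (V * B) * B'" using c by (simp add: assoc_mult_mat[of _ n n _ n _ n])
  also have "\<dots> = (M' * M) * V * B'" using c by (simp add: assoc_mult_mat[of _ n n _ n _ n] flip: MV)
  also have "\<dots> = V * B'" using c by (simp add: M'M)
  finally show ?thesis .
qed

lemma four_block_diag_mult_inverse:
  fixes P Q P' Q' :: "'a::comm_ring_1 mat"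
  assumes "P \<in> carrier_mat p p" "Q \<in> carrier_mat q q" "P' \<in> carrier_mat p p" "Q' \<in> carrier_mat q q"
    and "P * P' = 1\<^sub>m p" "Q * Q' = 1\<^sub>m q"
  shows "four_block_mat P (0\<^sub>m p q) (0\<^sub>m q p) Q * four_block_mat P' (0\<^sub>m p q) (0\<^sub>m q p) Q' = 1\<^sub>m (p + q)"
  using assms by (simp add: mult_four_block_mat[of _ p p _ q _ q _ _ p _ q])

definition sym_lo :: "nat \<Rightarrow> nat \<Rightarrow> nat" where
  "sym_lo N j = (if j \<le> N div 2 then j else j - (N div 2 + 1))"

definition sym_coeff :: "nat \<Rightarrow> nat \<Rightarrow> 'a::comm_ring_1" where
  "sym_coeff N j = (if j \<le> N div 2 then (if 2 * j = N then 0 else 1) else -1)"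

text \<open>Columns \<open>j \<le> N div 2\<close> of \<open>sym_basis N\<close> are e_j + e_(N-j) (just e_j when 2j = N),
  column \<open>N div 2 + 1 + q\<close> is e_q - e_(N-q).\<close>

definition sym_basis :: "nat \<Rightarrow> 'a::comm_ring_1 mat" where
  "sym_basis N = mat (N+1) (N+1) (\<lambda>(l,j).
     (if l = sym_lo N j then 1 else 0) + (if l = N - sym_lo N j then sym_coeff N j else 0))"

text \<open>A left inverse of \<open>sym_basis\<close>; its entries 1/2 are why characteristic 0 is assumed.\<close>

definition sym_coords :: "nat \<Rightarrow> 'a::field mat" where
  "sym_coords N = mat (N+1) (N+1) (\<lambda>(j,l).
     ((if l = sym_lo N j then 1 else 0) +
      (if l = N - sym_lo N j then (if j \<le> N div 2 then 1 else -1) else 0)) / 2)"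

lemma sym_lo_le: "j \<le> N \<Longrightarrow> 2 * sym_lo N j \<le> N"
  and sym_lo_less: "N div 2 < j \<Longrightarrow> j \<le> N \<Longrightarrow> 2 * sym_lo N j < N"
  by (auto simp: sym_lo_def)

lemma sym_coords_mult_basis: "sym_coords N * (sym_basis N :: 'a::field_char_0 mat) = 1\<^sub>m (N+1)"
proof (rule eq_matI)
  fix r j assume "r < dim_row (1\<^sub>m (N+1) :: 'a mat)" "j < dim_col (1\<^sub>m (N+1) :: 'a mat)"
  then have rj: "r \<le> N" "j \<le> N" by auto
  define a where "a = sym_lo N r"
  define b where "b = sym_lo N j"
  have ab: "2 * a \<le> N" "2 * b \<le> N" using rj sym_lo_le unfolding a_def b_def by auto
  then have ab_le: "b \<le> N" "N - b \<le> N" by auto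
  have "(sym_coords N * (sym_basis N :: 'a mat)) $$ (r,j) =
      sym_coords N $$ (r, b) + sym_coeff N j * sym_coords N $$ (r, N - b)"
    unfolding b_def using rj
    by (intro index_mult_mat_sparse_col[where n="N+1"]) (auto simp: sym_coords_def sym_basis_def sym_lo_def)
  also have "\<dots> = (if b = a then (1 + (if r \<le> N div 2 then 1 else -1) * sym_coeff N j
      + (if 2 * a = N then (if r \<le> N div 2 then 1 else -1) + sym_coeff N j else 0)) / 2 else 0)"
  proof -
    have W: "sym_coords N $$ (r, l) = ((if l = a then 1 else 0) +
        (if l = N - a then (if r \<le> N div 2 then 1 else -1) else 0)) / (2::'a)" if "l \<le> N" for l
      using that rj unfolding a_def sym_coords_def by simp
    have "(b = N - a) = (b = a \<and> 2 * a = N)" "(N - b = a) = (b = a \<and> 2 * a = N)" "(N - b = N - a) = (b = a)"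
      using ab by auto
    then show ?thesis using ab unfolding W[OF ab_le(1)] W[OF ab_le(2)] by (simp add: add_divide_distrib)
  qed
  also have "\<dots> = 1\<^sub>m (N+1) $$ (r,j)"
  proof (cases "r \<le> N div 2"; cases "j \<le> N div 2")
    assume "r \<le> N div 2" "j \<le> N div 2"
    then show ?thesis using rj unfolding a_def b_def by (simp add: sym_lo_def sym_coeff_def)
  next
    assume "r \<le> N div 2" "\<not> j \<le> N div 2"
    then show ?thesis using rj sym_lo_less[of N j] unfolding a_def b_def by (simp add: sym_lo_def sym_coeff_def)
  next
    assume "\<not> r \<le> N div 2" "j \<le> N div 2"
    then show ?thesis using rj sym_lo_less[of N r] unfolding a_def b_def by (simp add: sym_lo_def sym_coeff_def)
  next
    assume "\<not> r \<le> N div 2" "\<not> j \<le> N div 2"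
    moreover have "(j - (N div 2 + 1) = r - (N div 2 + 1)) = (j = r)" using calculation by auto
    ultimately show ?thesis using rj sym_lo_less[of N r] sym_lo_less[of N j] unfolding a_def b_def by (simp add: sym_lo_def sym_coeff_def)
  qed
  finally show "(sym_coords N * (sym_basis N :: 'a mat)) $$ (r,j) = 1\<^sub>m (N+1) $$ (r,j)" .
qed (auto simp: sym_coords_def sym_basis_def)

lemma det_sym_basis_nonzero: "det (sym_basis N :: 'a::field_char_0 mat) \<noteq> 0"
proof
  assume "det (sym_basis N :: 'a mat) = 0"
  then have "det (sym_coords N * (sym_basis N :: 'a mat)) = 0"
    by (simp add: det_mult[of _ "N+1"] sym_coords_def sym_basis_def)
  then show False by (simp add: sym_coords_mult_basis)
qed

definition sym_sign :: "nat \<Rightarrow> nat \<Rightarrow> 'a::comm_ring_1" where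
  "sym_sign N i = (if 2 * i < N then 1 else if N < 2 * i then -1 else 0)"

lemma sym_basis_col:
  "l \<le> N \<Longrightarrow> j \<le> N \<Longrightarrow> sym_basis N $$ (l,j) =
     (if l = sym_lo N j then 1 else 0) + (if l = N - sym_lo N j then sym_coeff N j else 0)"
  by (simp add: sym_basis_def)

lemma sym_basis_row:
  assumes "i \<le> N" "l \<le> N"
  shows "sym_basis N $$ (i,l) = (if l = min i (N-i) then 1 else 0) +
     (if l = N div 2 + 1 + min i (N-i) then sym_sign N i else (0::'a::comm_ring_1))"
proof (cases "l \<le> N div 2")
  case True
  then have "(i = l \<or> (i = N - l \<and> 2 * l \<noteq> N)) = (l = min i (N-i))" using assms by linarith
  moreover have "\<not> (i = l \<and> i = N - l \<and> 2 * l \<noteq> N)" by auto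
  ultimately show ?thesis using True assms by (auto simp: sym_basis_def sym_lo_def sym_coeff_def)
next
  case False
  then have "l \<noteq> min i (N-i)" using assms by linarith
  moreover have "(i = l - (N div 2 + 1)) = (l = N div 2 + 1 + min i (N-i) \<and> 2 * i < N)"
    using False assms by linarith
  moreover have "(i = N - (l - (N div 2 + 1))) = (l = N div 2 + 1 + min i (N-i) \<and> N < 2 * i)"
    using False assms by linarith
  ultimately show ?thesis using False assms by (auto simp: sym_basis_def sym_lo_def sym_coeff_def sym_sign_def)
qed

definition one_minus_A :: "(int \<Rightarrow> 'a::comm_ring_1) \<Rightarrow> nat \<Rightarrow> 'a mat" where
  "one_minus_A w N = 1\<^sub>m (N+1) - A_mat w N"

definition one_minus_Aplus :: "(int \<Rightarrow> 'a::comm_ring_1) \<Rightarrow> nat \<Rightarrow> 'a mat" where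
  "one_minus_Aplus w N = 1\<^sub>m (N div 2 + 1) - Aplus_mat w N"

definition one_minus_Aminus :: "(int \<Rightarrow> 'a::comm_ring_1) \<Rightarrow> nat \<Rightarrow> 'a mat" where
  "one_minus_Aminus w N = 1\<^sub>m ((N+1) div 2) - Aminus_mat w N"

lemma one_minus_A_index:
  "i \<le> N \<Longrightarrow> l \<le> N \<Longrightarrow> one_minus_A w N $$ (i,l) = (if i = l then 1 else 0) - w (int l - int i)"
  by (simp add: one_minus_A_def A_mat_def)

lemma one_minus_Aplus_index:
  "i \<le> N div 2 \<Longrightarrow> l \<le> N div 2 \<Longrightarrow> one_minus_Aplus w N $$ (i,l) = (if i = l then 1 else 0) -
     (if 2 * l < N then w (int l - int i) + w (int N - int l - int i) else w (int l - int i))"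
  by (simp add: one_minus_Aplus_def Aplus_mat_def)

lemma one_minus_Aminus_index:
  "2 * i < N \<Longrightarrow> 2 * l < N \<Longrightarrow> one_minus_Aminus w N $$ (i,l) = (if i = l then 1 else 0) -
     (w (int l - int i) - w (int N - int l - int i))"
  by (simp add: one_minus_Aminus_def Aminus_mat_def)

lemma even_fun_eqI: "(\<And>s. w (- s) = w s) \<Longrightarrow> x = - y \<Longrightarrow> w x = w y"
  by auto

lemma one_minus_A_fold_plus:
  assumes w: "\<And>s. w (- s) = w s" and i: "i \<le> N" and j: "j \<le> N div 2"
  shows "one_minus_A w N $$ (i,j) + sym_coeff N j * one_minus_A w N $$ (i, N - j) =
    one_minus_Aplus w N $$ (min i (N-i), j)"
proof (cases "2 * i \<le> N")
  case True
  moreover have "2 * j \<le> N" "2 * j < N \<Longrightarrow> i \<noteq> N - j" using True j by linarith+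
  ultimately show ?thesis using i j by (simp add: one_minus_A_index one_minus_Aplus_index sym_coeff_def of_nat_diff)
next
  case False
  have "w (int j - int i) = w (int N - int j - int (N - i))" "w (int (N - j) - int i) = w (int j - int (N - i))"
    using i j by (intro even_fun_eqI[of w, OF w]; simp add: of_nat_diff)+
  moreover have "i \<noteq> j" "(i = N - j) = (N - i = j)" using False i j by linarith+
  moreover have "2 * j = N \<Longrightarrow> w (int j - int i) = w (int j - int (N - i))"
    using i by (intro even_fun_eqI[of w, OF w]) (simp add: of_nat_diff)
  moreover have "2 * j \<le> N" "2 * j = N \<Longrightarrow> N - i \<noteq> j" using False i j by linarith+
  ultimately show ?thesis using False i j by (simp add: one_minus_A_index one_minus_Aplus_index sym_coeff_def)
qed

text \<open>When 2i = N the index \<open>min i (N - i)\<close> lies outside 1 - A^-, but then \<open>sym_sign N i = 0\<close>.\<close>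

lemma one_minus_A_fold_minus:
  assumes w: "\<And>s. w (- s) = w s" and i: "i \<le> N" and q: "2 * q < N"
  shows "one_minus_A w N $$ (i,q) - one_minus_A w N $$ (i, N - q) =
    sym_sign N i * one_minus_Aminus w N $$ (min i (N-i), q)"
proof -
  consider "2 * i < N" | "N < 2 * i" | "2 * i = N" by linarith
  then show ?thesis
  proof cases
    case 1
    then have "i \<noteq> N - q" using q by linarith
    then show ?thesis using 1 i q by (simp add: one_minus_A_index one_minus_Aminus_index sym_sign_def of_nat_diff)
  next
    case 2
    have "w (int q - int i) = w (int N - int q - int (N - i))" "w (int (N - q) - int i) = w (int q - int (N - i))"
      using i q by (intro even_fun_eqI[of w, OF w]; simp add: of_nat_diff)+
    moreover have "i \<noteq> q" "(i = N - q) = (N - i = q)" "2 * (N - i) < N" using 2 i q by linarith+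
    ultimately show ?thesis using 2 i q by (simp add: one_minus_A_index one_minus_Aminus_index sym_sign_def)
  next
    case 3
    have "w (int q - int i) = w (int (N - q) - int i)"
      using 3 q by (intro even_fun_eqI[of w, OF w]) (simp add: of_nat_diff)
    moreover have "i \<noteq> q" "i \<noteq> N - q" using 3 q by linarith+
    ultimately show ?thesis using 3 i q by (simp add: one_minus_A_index sym_sign_def)
  qed
qed

definition sym_block :: "(int \<Rightarrow> 'a::comm_ring_1) \<Rightarrow> nat \<Rightarrow> 'a mat" where
  "sym_block w N = four_block_mat (one_minus_Aplus w N) (0\<^sub>m (N div 2 + 1) ((N+1) div 2))
     (0\<^sub>m ((N+1) div 2) (N div 2 + 1)) (one_minus_Aminus w N)"

lemma one_minus_A_carrier: "one_minus_A w N \<in> carrier_mat (N+1) (N+1)"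
  by (auto simp: one_minus_A_def A_mat_def)

lemma one_minus_Aplus_carrier: "one_minus_Aplus w N \<in> carrier_mat (N div 2 + 1) (N div 2 + 1)"
  by (auto simp: one_minus_Aplus_def Aplus_mat_def)

lemma one_minus_Aminus_carrier: "one_minus_Aminus w N \<in> carrier_mat ((N+1) div 2) ((N+1) div 2)"
  by (auto simp: one_minus_Aminus_def Aminus_mat_def)

lemma sym_basis_carrier: "sym_basis N \<in> carrier_mat (N+1) (N+1)"
  by (simp add: sym_basis_def)

lemma sym_block_carrier: "sym_block w N \<in> carrier_mat (N+1) (N+1)"
proof -
  have "N div 2 + 1 + (N+1) div 2 = N+1" by simp
  then show ?thesis unfolding sym_block_def
    by (metis four_block_carrier_mat one_minus_Aplus_carrier one_minus_Aminus_carrier)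
qed

lemma sym_basis_dim [simp]: "dim_row (sym_basis N) = N+1" "dim_col (sym_basis N) = N+1"
  by (simp_all add: sym_basis_def)

lemma sym_block_dim [simp]: "dim_row (sym_block w N) = N+1" "dim_col (sym_block w N) = N+1"
  using sym_block_carrier[of w N] by auto

lemma one_minus_A_dim [simp]: "dim_row (one_minus_A w N) = N+1" "dim_col (one_minus_A w N) = N+1"
  by (simp_all add: one_minus_A_def A_mat_def)

lemma sym_block_index:
  assumes "r \<le> N" "j \<le> N"
  shows "sym_block w N $$ (r,j) =
    (if r \<le> N div 2 then (if j \<le> N div 2 then one_minus_Aplus w N $$ (r,j) else 0)
     else (if j \<le> N div 2 then 0 else one_minus_Aminus w N $$ (r - (N div 2 + 1), j - (N div 2 + 1))))"
proof -
  have "N div 2 + 1 + (N+1) div 2 = N+1" by simp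
  then show ?thesis using assms one_minus_Aplus_carrier[of w N] one_minus_Aminus_carrier[of w N]
    unfolding sym_block_def by (subst index_mat_four_block) auto
qed

lemma one_minus_A_mult_sym_basis:
  fixes w :: "int \<Rightarrow> 'a::comm_ring_1"
  assumes w: "\<And>s. w (- s) = w s"
  shows "one_minus_A w N * sym_basis N = sym_basis N * sym_block w N"
proof (rule eq_matI)
  fix i j assume "i < dim_row (sym_basis N * sym_block w N)" "j < dim_col (sym_basis N * sym_block w N)"
  then have ij: "i \<le> N" "j \<le> N" by simp_all
  define p where "p = N div 2 + 1"
  define i' where "i' = min i (N - i)"
  have i': "i' \<le> N div 2" using ij unfolding i'_def by linarith
  have lo: "sym_lo N j < N + 1" "N - sym_lo N j < N + 1" using ij by (auto simp: sym_lo_def)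
  have "(one_minus_A w N * sym_basis N) $$ (i,j) =
      one_minus_A w N $$ (i, sym_lo N j) + sym_coeff N j * one_minus_A w N $$ (i, N - sym_lo N j)"
    using ij lo one_minus_A_carrier[of w N]
    by (intro index_mult_mat_sparse_col[where n="N+1"]) (auto simp: sym_basis_col sym_basis_def)
  also have "\<dots> = (if j \<le> N div 2 then one_minus_Aplus w N $$ (i', j)
      else sym_sign N i * one_minus_Aminus w N $$ (i', j - p))"
  proof (cases "j \<le> N div 2")
    case True
    then have "sym_lo N j = j" by (simp add: sym_lo_def)
    with one_minus_A_fold_plus[of w, OF w ij(1) True] show ?thesis
      using True unfolding i'_def by simp
  next
    case False
    then have lo: "sym_lo N j = j - p" and c: "sym_coeff N j = -1" and "2 * (j - p) < N"
      using ij unfolding p_def sym_lo_def sym_coeff_def by auto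
    with one_minus_A_fold_minus[of w, OF w ij(1) this(3)] show ?thesis
      using False unfolding i'_def lo c by simp
  qed
  also have "\<dots> = sym_block w N $$ (i', j) + sym_sign N i * sym_block w N $$ (p + i', j)"
  proof (cases "sym_sign N i = (0::'a)")
    case False
    then have "p + i' \<le> N" using ij unfolding p_def i'_def sym_sign_def by (auto split: if_splits)
    then show ?thesis using ij i' unfolding p_def by (simp add: sym_block_index)
  qed (use ij i' in \<open>simp add: sym_block_index\<close>)
  also have "\<dots> = (sym_basis N * sym_block w N) $$ (i,j)"
  proof (rule index_mult_mat_sparse_row[where n="N+1", symmetric])
    show "p + i' < N + 1 \<or> sym_sign N i = (0::'a)"
      using ij unfolding p_def i'_def sym_sign_def by auto
  next
    fix l assume "l < N + 1"
    then show "sym_basis N $$ (i, l) = (if l = i' then 1 else 0) + (if l = p + i' then sym_sign N i else 0)"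
      using ij unfolding p_def i'_def by (simp add: sym_basis_row)
  qed (use ij i' in simp_all)
  finally show "(one_minus_A w N * sym_basis N) $$ (i,j) = (sym_basis N * sym_block w N) $$ (i,j)" .
qed simp_all

lemma det_one_minus_A_factor:
  fixes w :: "int \<Rightarrow> 'a::field_char_0"
  assumes w: "\<And>s. w (- s) = w s"
  shows "det (one_minus_A w N) = det (one_minus_Aplus w N) * det (one_minus_Aminus w N)"
proof -
  have "det (one_minus_A w N) * det (sym_basis N) = det (sym_basis N) * det (sym_block w N)"
    using one_minus_A_mult_sym_basis[of w, OF w] one_minus_A_carrier sym_basis_carrier sym_block_carrier
    by (metis det_mult)
  then have "det (one_minus_A w N) = det (sym_block w N)"
    using det_sym_basis_nonzero[of N, where 'a='a] by (simp add: mult.commute)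
  also have "\<dots> = det (one_minus_Aplus w N) * det (one_minus_Aminus w N)"
    unfolding sym_block_def
    by (rule det_four_block_mat_upper_right_zero[OF one_minus_Aplus_carrier refl _ one_minus_Aminus_carrier]) simp
  finally show ?thesis .
qed

lemma inv_one_minus_A_fold:
  fixes w :: "int \<Rightarrow> 'a::field_char_0"
  assumes w: "\<And>s. w (- s) = w s" and k: "1 \<le> k" and d: "det (one_minus_A w k) \<noteq> 0" and j: "j \<le> k"
  shows "inv_mat (one_minus_A w k) $$ (0, sym_lo k j)
      + sym_coeff k j * inv_mat (one_minus_A w k) $$ (0, k - sym_lo k j) =
    (if j \<le> k div 2 then inv_mat (one_minus_Aplus w k) $$ (0, j)
     else inv_mat (one_minus_Aminus w k) $$ (0, j - (k div 2 + 1)))"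
proof -
  define p where "p = k div 2 + 1"
  define m where "m = (k + 1) div 2"
  have pm: "p + m = k + 1" "0 < m" using k unfolding p_def m_def by auto
  have Mp: "one_minus_Aplus w k \<in> carrier_mat p p" and Mm: "one_minus_Aminus w k \<in> carrier_mat m m"
    unfolding p_def m_def by (rule one_minus_Aplus_carrier one_minus_Aminus_carrier)+
  have "det (one_minus_Aplus w k) \<noteq> 0" "det (one_minus_Aminus w k) \<noteq> 0"
    using d det_one_minus_A_factor[of w, OF w] by auto
  note P' = inv_mat[OF Mp this(1)] and Q' = inv_mat[OF Mm this(2)]
  note M' = inv_mat[OF one_minus_A_carrier d]
  define B' where "B' = four_block_mat (inv_mat (one_minus_Aplus w k)) (0\<^sub>m p m) (0\<^sub>m m p)
    (inv_mat (one_minus_Aminus w k))"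
  have B': "B' \<in> carrier_mat (k+1) (k+1)"
    unfolding B'_def using four_block_carrier_mat[OF P'(1) Q'(1)] pm by metis
  have "sym_block w k * B' = 1\<^sub>m (p + m)"
    unfolding sym_block_def B'_def p_def[symmetric] m_def[symmetric]
    using Mp Mm P' Q' by (intro four_block_diag_mult_inverse)
  then have intertwine: "inv_mat (one_minus_A w k) * sym_basis k = sym_basis k * B'"
    using pm(1) by (intro mult_inverse_intertwine[OF one_minus_A_carrier sym_basis_carrier
      sym_block_carrier M'(1) B' one_minus_A_mult_sym_basis[of w, OF w] M'(3)]) simp
  have lo: "sym_lo k j < k + 1" "k - sym_lo k j < k + 1" using j by (auto simp: sym_lo_def)
  have "inv_mat (one_minus_A w k) $$ (0, sym_lo k j)
      + sym_coeff k j * inv_mat (one_minus_A w k) $$ (0, k - sym_lo k j) =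
      (inv_mat (one_minus_A w k) * sym_basis k) $$ (0,j)"
    using j lo M'(1) by (intro index_mult_mat_sparse_col[where n="k+1", symmetric]) (auto simp: sym_basis_col)
  also have "\<dots> = (sym_basis k * B') $$ (0,j)" by (simp add: intertwine)
  also have "\<dots> = B' $$ (0,j) + 1 * B' $$ (p,j)"
  proof (rule index_mult_mat_sparse_row[where n="k+1"])
    fix l assume "l < k + 1"
    then show "sym_basis k $$ (0, l) = (if l = 0 then 1 else 0) + (if l = p then 1 else 0)"
      using k unfolding p_def by (simp add: sym_basis_row sym_sign_def)
  qed (use j pm B' in \<open>auto simp: p_def\<close>)
  also have "\<dots> = (if j \<le> k div 2 then inv_mat (one_minus_Aplus w k) $$ (0, j)
     else inv_mat (one_minus_Aminus w k) $$ (0, j - (k div 2 + 1)))"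
    using j pm P'(1) Q'(1) unfolding B'_def p_def by auto
  finally show ?thesis .
qed

lemma F_Suc: "F w (Suc N) = det (one_minus_A w N)"
  by (simp add: F_def one_minus_A_def)

lemma Fplus_Suc: "Fplus w (Suc N) = det (one_minus_Aplus w N)"
  by (simp add: Fplus_def one_minus_Aplus_def Aplus_mat_def)

lemma Fminus_Suc: "Fminus w (Suc N) = det (one_minus_Aminus w N)"
  by (simp add: Fminus_def one_minus_Aminus_def Aminus_mat_def)

lemma Fplus_cof_eq: "Fplus_cof w k l = cofactor (one_minus_Aplus w k) l 0"
  by (simp add: Fplus_cof_def one_minus_Aplus_def Aplus_mat_def)

lemma Fminus_cof_eq: "Fminus_cof w k l = cofactor (one_minus_Aminus w k) l 0"
  by (simp add: Fminus_cof_def one_minus_Aminus_def Aminus_mat_def)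

lemma E_eq: "E w k l = inv_mat (one_minus_A w k) $$ (0, l)"
  by (simp add: E_def one_minus_A_def)

lemma F_eq_Fplus_mult_Fminus:
  fixes w :: "int \<Rightarrow> 'a::field_char_0"
  assumes "\<And>s. w (- s) = w s"
  shows "F w k = Fplus w k * Fminus w k"
  using det_one_minus_A_factor[of w, OF assms]
  by (cases k) (simp add: F_def Fplus_def Fminus_def, simp add: F_Suc Fplus_Suc Fminus_Suc)

context
  fixes w :: "int \<Rightarrow> 'a::field_char_0" and k :: nat
  assumes w: "\<And>s. w (- s) = w s" and k: "1 \<le> k" and F_nonzero: "F w (k + 1) \<noteq> 0"
begin

private lemma det_nonzero:
  "det (one_minus_A w k) \<noteq> 0" "det (one_minus_Aplus w k) \<noteq> 0" "det (one_minus_Aminus w k) \<noteq> 0"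
  using F_nonzero det_one_minus_A_factor[of w, OF w] by (simp_all add: F_Suc)

lemma E_add_reflect:
  assumes "2 * l < k"
  shows "E w k l + E w k (k - l) = Fplus_cof w k l / Fplus w (k + 1)"
proof -
  have l: "l \<le> k div 2" "2 * l \<noteq> k" using assms by auto
  then show ?thesis
    using inv_one_minus_A_fold[of w, OF w k det_nonzero(1), of l]
      inv_mat_index[OF one_minus_Aplus_carrier det_nonzero(2), of 0 l]
    by (simp add: E_eq Fplus_cof_eq Fplus_Suc sym_lo_def sym_coeff_def)
qed

lemma E_diff_reflect:
  assumes "2 * l < k"
  shows "E w k l - E w k (k - l) = Fminus_cof w k l / Fminus w (k + 1)"
proof -
  define j where "j = k div 2 + 1 + l"
  have j: "j \<le> k" "\<not> j \<le> k div 2" "sym_lo k j = l" "j - (k div 2 + 1) = l" "l < (k + 1) div 2"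
    using assms unfolding j_def sym_lo_def by auto
  then show ?thesis
    using inv_one_minus_A_fold[of w, OF w k det_nonzero(1) j(1)]
      inv_mat_index[OF one_minus_Aminus_carrier det_nonzero(3), of 0 l]
    by (simp add: E_eq Fminus_cof_eq Fminus_Suc sym_coeff_def)
qed

lemma E_middle:
  assumes "even k"
  shows "E w k (k div 2) = Fplus_cof w k (k div 2) / Fplus w (k + 1)"
  using inv_one_minus_A_fold[of w, OF w k det_nonzero(1), of "k div 2"] assms
    inv_mat_index[OF one_minus_Aplus_carrier det_nonzero(2), of 0 "k div 2"]
  by (simp add: E_eq Fplus_cof_eq Fplus_Suc sym_lo_def sym_coeff_def)

end

lemma symmetric_weights_even:
  fixes S :: "'b::group_add set"
  assumes "\<And>s. s \<notin> S \<Longrightarrow> w s = 0" and "uminus ` S = S" and "\<And>s. s \<in> S \<Longrightarrow> w (- s) = w s"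
  shows "w (- s) = w s"
proof (cases "s \<in> S")
  case False
  have "- s \<notin> S"
  proof
    assume "- s \<in> S"
    then have "s \<in> uminus ` S" by (metis image_eqI minus_minus)
    with False assms(2) show False by simp
  qed
  with False show ?thesis using assms(1) by simp
qed (use assms(3) in simp)

theorem mainTheorem11:
  fixes S :: "int set" and w :: "int \<Rightarrow> 'a::field_char_0"
  assumes finS: "finite S" and neS: "S \<noteq> {}" and maxS: "Max S \<ge> 1"
    and supp: "\<And>s. s \<notin> S \<Longrightarrow> w s = 0"
    and symS: "uminus ` S = S"
    and symw: "\<And>s. s \<in> S \<Longrightarrow> w (- s) = w s"
  shows "(\<forall>k. F w k = Fplus w k * Fminus w k) \<and>
         (\<forall>k \<ge> 1. F w (k + 1) \<noteq> 0 \<longrightarrow>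
            (\<forall>l. 2 * l < k \<longrightarrow>
               E w k l + E w k (k - l) = Fplus_cof w k l / Fplus w (k + 1) \<and>
               E w k l - E w k (k - l) = Fminus_cof w k l / Fminus w (k + 1)) \<and>
            (even k \<longrightarrow> E w k (k div 2) = Fplus_cof w k (k div 2) / Fplus w (k + 1)))"
proof -
  have w: "\<And>s. w (- s) = w s"
    using symmetric_weights_even[of S w, OF supp symS symw] .
  show ?thesis
    using F_eq_Fplus_mult_Fminus[of w, OF w] E_add_reflect[of w, OF w] E_diff_reflect[of w, OF w]
      E_middle[of w, OF w] by blast
qed

end
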